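(* Let $L$ be a reduced Latin square of order $n$ with rows $\sigma_1,\dots,\sigma_n$ and columns $\pi_1,\dots,\pi_n$ (as permutations). For each $k\in[n]$ let $I_k$ be the set of permutations $\alpha\in S_n$ such that for every $i\in[n]$ the permutations $\sigma_{\alpha(i)}$ and $\sigma_k^{-1}\sigma_i$ have the same cycle structure (this set is empty unless the multiset of cycle structures of $\{\sigma_k^{-1}\sigma_i\}_{i=1}^n$ coincides with the multiset of cycle structures of $\{\sigma_i\}_{i=1}^n$). For $\alpha\in S_n$ and $j\in[n]$ let $\Theta_{\alpha,j}=(\alpha,\ \alpha\pi_j\sigma_{\alpha^{-1}(1)}^{-1},\ \alpha\pi_j)$. Then $$\mathfrak A(L)=\{\Theta_{\alpha,j}:\ \alpha\in\textstyle\bigcup_{k=1}^n I_k,\ j\in[n],\ \Theta_{\alpha,j}(L)=L\}.$$ In other words, the algorithm that computes the cycle structures of the rows, forms the sets $I_k$, and for each $\alpha\in\bigcup_k I_k$ and each $j$ tests whether $\Theta_{\alpha,j}(L)=L$, outputs exactly the autotopy group $\mathfrak A(L)$.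
   Context: A Latin square of order $n$ is an $n\times n$ array with entries in $[n]$, each symbol once in each row and column. Permutations compose right to left. An isotopism $(\alpha,\beta,\gamma)\in S_n^3$ acts by $(\alpha,\beta,\gamma)(L)=L'$ with $L'(\alpha(r),\beta(c))=\gamma(L(r,c))$; $\mathfrak A(L)=\{\Theta\in S_n^3:\Theta(L)=L\}$ is the autotopy group. Rows and columns are viewed as permutations: if symbol $i$ appears in the $j$th place of a row (column) $\sigma$, then $\sigma(i)=j$; so row $r$ is $\sigma_r$ with $\sigma_r(L(r,c))=c$ and column $c$ is $\pi_c$ with $\pi_c(L(r,c))=r$. $L$ is reduced if its first row and first column are the identity permutation. The cycle structure of a permutation is the multiset of lengths of cycles in its disjoint cycle decomposition. *)

theory Defs
  imports "HOL-Combinatorics.Combinatorics" "HOL-Library.Multiset"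
begin

text \<open>Symbols, rows and columns are indexed by [n] = {1..n}.
  A square is a function L :: nat => nat => nat; only its values on [n] x [n] matter.\<close>

definition latin_square :: "nat \<Rightarrow> (nat \<Rightarrow> nat \<Rightarrow> nat) \<Rightarrow> bool" where
  "latin_square n L \<longleftrightarrow>
     (\<forall>r\<in>{1..n}. bij_betw (\<lambda>c. L r c) {1..n} {1..n}) \<and>
     (\<forall>c\<in>{1..n}. bij_betw (\<lambda>r. L r c) {1..n} {1..n})"

definition row_perm :: "nat \<Rightarrow> (nat \<Rightarrow> nat \<Rightarrow> nat) \<Rightarrow> nat \<Rightarrow> nat \<Rightarrow> nat" where
  "row_perm n L r = (\<lambda>s. if s \<in> {1..n} then (THE c. c \<in> {1..n} \<and> L r c = s) else s)"

definition col_perm :: "nat \<Rightarrow> (nat \<Rightarrow> nat \<Rightarrow> nat) \<Rightarrow> nat \<Rightarrow> nat \<Rightarrow> nat" where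
  "col_perm n L c = (\<lambda>s. if s \<in> {1..n} then (THE r. r \<in> {1..n} \<and> L r c = s) else s)"

definition reduced :: "nat \<Rightarrow> (nat \<Rightarrow> nat \<Rightarrow> nat) \<Rightarrow> bool" where
  "reduced n L \<longleftrightarrow> row_perm n L 1 = id \<and> col_perm n L 1 = id"

text \<open>Isotopism action: L'(alpha r, beta c) = gamma (L r c).\<close>
definition isotope ::
  "(nat \<Rightarrow> nat) \<times> (nat \<Rightarrow> nat) \<times> (nat \<Rightarrow> nat) \<Rightarrow> (nat \<Rightarrow> nat \<Rightarrow> nat) \<Rightarrow> (nat \<Rightarrow> nat \<Rightarrow> nat)" where
  "isotope \<Theta> L = (case \<Theta> of (\<alpha>, \<beta>, \<gamma>) \<Rightarrow> (\<lambda>r c. \<gamma> (L (inv \<alpha> r) (inv \<beta> c))))"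

definition is_isotopism :: "nat \<Rightarrow> (nat \<Rightarrow> nat) \<times> (nat \<Rightarrow> nat) \<times> (nat \<Rightarrow> nat) \<Rightarrow> bool" where
  "is_isotopism n \<Theta> \<longleftrightarrow> (case \<Theta> of (\<alpha>, \<beta>, \<gamma>) \<Rightarrow>
      \<alpha> permutes {1..n} \<and> \<beta> permutes {1..n} \<and> \<gamma> permutes {1..n})"

definition fixes_square :: "nat \<Rightarrow> (nat \<Rightarrow> nat) \<times> (nat \<Rightarrow> nat) \<times> (nat \<Rightarrow> nat) \<Rightarrow> (nat \<Rightarrow> nat \<Rightarrow> nat) \<Rightarrow> bool" where
  "fixes_square n \<Theta> L \<longleftrightarrow> (\<forall>r\<in>{1..n}. \<forall>c\<in>{1..n}. isotope \<Theta> L r c = L r c)"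

definition autotopy_group :: "nat \<Rightarrow> (nat \<Rightarrow> nat \<Rightarrow> nat) \<Rightarrow> ((nat \<Rightarrow> nat) \<times> (nat \<Rightarrow> nat) \<times> (nat \<Rightarrow> nat)) set" where
  "autotopy_group n L = {\<Theta>. is_isotopism n \<Theta> \<and> fixes_square n \<Theta> L}"

definition cycle_structure :: "nat \<Rightarrow> (nat \<Rightarrow> nat) \<Rightarrow> nat multiset" where
  "cycle_structure n p = image_mset card (mset_set ((\<lambda>x. orbit p x) ` {1..n}))"

definition I_set :: "nat \<Rightarrow> (nat \<Rightarrow> nat \<Rightarrow> nat) \<Rightarrow> nat \<Rightarrow> (nat \<Rightarrow> nat) set" where
  "I_set n L k = {\<alpha>. \<alpha> permutes {1..n} \<and>
     (\<forall>i\<in>{1..n}. cycle_structure n (row_perm n L (\<alpha> i))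
                 = cycle_structure n (inv (row_perm n L k) \<circ> row_perm n L i))}"

definition Theta :: "nat \<Rightarrow> (nat \<Rightarrow> nat \<Rightarrow> nat) \<Rightarrow> (nat \<Rightarrow> nat) \<Rightarrow> nat
                     \<Rightarrow> (nat \<Rightarrow> nat) \<times> (nat \<Rightarrow> nat) \<times> (nat \<Rightarrow> nat)" where
  "Theta n L \<alpha> j = (\<alpha>, \<alpha> \<circ> col_perm n L j \<circ> inv (row_perm n L (inv \<alpha> 1)), \<alpha> \<circ> col_perm n L j)"

end

theory Submission
  imports Defs
begin

(* An autotopy (\<alpha>, \<beta>, \<gamma>) satisfies \<gamma> (L r c) = L (\<alpha> r) (\<beta> c). Read along the column
   j = inv \<beta> 1, which \<beta> sends to the identity first column, this gives \<gamma> = \<alpha> \<circ> \<pi> j; read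
   along the row r0 = inv \<alpha> 1, sent to the identity first row, it gives \<beta> = \<gamma> \<circ> inv (\<sigma> r0).
   So every autotopy is some Theta \<alpha> j. Read along an arbitrary row i, the identity becomes
   \<sigma> (\<alpha> i) = \<gamma> \<circ> (inv (\<sigma> r0) \<circ> \<sigma> i) \<circ> inv \<gamma>; conjugate permutations have the same
   cycle structure, so \<alpha> \<in> I r0. Conversely every Theta \<alpha> j is an isotopism, so those fixing L
   are autotopies. (Here \<sigma> = row_perm n L and \<pi> = col_perm n L.) *)

lemma permutes_eqI:
  assumes "p permutes S" "q permutes S" "\<And>x. x \<in> S \<Longrightarrow> p x = q x"
  shows "p = q"
  using assms by (metis permutes_not_in ext)

lemma permutes_mem: "p permutes S \<Longrightarrow> x \<in> S \<Longrightarrow> p x \<in> S"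
  by (simp only: permutes_in_image)

lemma THE_inverse_eq_inv_into:
  assumes "bij_betw f S S" "s \<in> S"
  shows "(THE x. x \<in> S \<and> f x = s) = inv_into S f s"
  using assms by (intro the_equality)
    (auto simp: bij_betw_def bij_betw_inv_into_right inv_into_into inv_into_f_eq)

lemma THE_inverse_permutes:
  assumes "bij_betw f S S"
  shows "(\<lambda>s. if s \<in> S then THE x. x \<in> S \<and> f x = s else s) permutes S"
proof (rule bij_imp_permutes)
  show "bij_betw (\<lambda>s. if s \<in> S then THE x. x \<in> S \<and> f x = s else s) S S"
    using bij_betw_inv_into[OF assms]
    by (rule bij_betw_cong[THEN iffD1, rotated]) (simp add: THE_inverse_eq_inv_into[OF assms])
qed simp

lemma THE_inverse_apply:
  assumes "bij_betw f S S" "x \<in> S"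
  shows "(\<lambda>s. if s \<in> S then THE x. x \<in> S \<and> f x = s else s) (f x) = x"
  using assms by (simp add: bij_betwE THE_inverse_eq_inv_into bij_betw_inv_into_left)

lemma latin_square_row_bij:
  "latin_square n L \<Longrightarrow> r \<in> {1..n} \<Longrightarrow> bij_betw (L r) {1..n} {1..n}"
  unfolding latin_square_def by (metis (no_types) eta_contract_eq)

lemma latin_square_col_bij:
  "latin_square n L \<Longrightarrow> c \<in> {1..n} \<Longrightarrow> bij_betw (\<lambda>r. L r c) {1..n} {1..n}"
  unfolding latin_square_def by blast

lemma row_perm_permutes:
  "latin_square n L \<Longrightarrow> r \<in> {1..n} \<Longrightarrow> row_perm n L r permutes {1..n}"
  unfolding row_perm_def by (rule THE_inverse_permutes) (rule latin_square_row_bij)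

lemma row_perm_apply:
  "latin_square n L \<Longrightarrow> r \<in> {1..n} \<Longrightarrow> c \<in> {1..n} \<Longrightarrow> row_perm n L r (L r c) = c"
  unfolding row_perm_def by (rule THE_inverse_apply) (rule latin_square_row_bij)

lemma col_perm_permutes:
  "latin_square n L \<Longrightarrow> c \<in> {1..n} \<Longrightarrow> col_perm n L c permutes {1..n}"
  unfolding col_perm_def using THE_inverse_permutes[OF latin_square_col_bij] .

lemma col_perm_apply:
  "latin_square n L \<Longrightarrow> r \<in> {1..n} \<Longrightarrow> c \<in> {1..n} \<Longrightarrow> col_perm n L c (L r c) = r"
  unfolding col_perm_def using THE_inverse_apply[OF latin_square_col_bij] .

lemma inv_row_perm_apply:
  "latin_square n L \<Longrightarrow> r \<in> {1..n} \<Longrightarrow> c \<in> {1..n} \<Longrightarrow> inv (row_perm n L r) c = L r c"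
  using permutes_inv_eq[OF row_perm_permutes] row_perm_apply by metis

lemma inv_col_perm_apply:
  "latin_square n L \<Longrightarrow> r \<in> {1..n} \<Longrightarrow> c \<in> {1..n} \<Longrightarrow> inv (col_perm n L c) r = L r c"
  using permutes_inv_eq[OF col_perm_permutes] col_perm_apply by metis

lemma L_row_perm_apply:
  assumes "latin_square n L" "r \<in> {1..n}" "s \<in> {1..n}"
  shows "L r (row_perm n L r s) = s"
proof -
  note \<sigma> = row_perm_permutes[OF assms(1,2)]
  have "L r (row_perm n L r s) = inv (row_perm n L r) (row_perm n L r s)"
    using inv_row_perm_apply[OF assms(1,2) permutes_mem[OF \<sigma> assms(3)]] by simp
  then show ?thesis by (simp add: permutes_inverses(2)[OF \<sigma>])
qed

lemma L_col_perm_apply: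
  assumes "latin_square n L" "c \<in> {1..n}" "s \<in> {1..n}"
  shows "L (col_perm n L c s) c = s"
proof -
  note \<pi> = col_perm_permutes[OF assms(1,2)]
  have "L (col_perm n L c s) c = inv (col_perm n L c) (col_perm n L c s)"
    using inv_col_perm_apply[OF assms(1) permutes_mem[OF \<pi> assms(3)] assms(2)] by simp
  then show ?thesis by (simp add: permutes_inverses(2)[OF \<pi>])
qed

lemma funpow_conjugate:
  assumes "bij g"
  shows "(g \<circ> q \<circ> inv g) ^^ m = g \<circ> q ^^ m \<circ> inv g"
proof (induction m)
  case 0
  then show ?case using assms by (simp add: bij_is_surj surj_f_inv_f fun_eq_iff)
next
  case (Suc m)
  then show ?case using assms by (simp add: bij_is_inj fun_eq_iff)
qed

lemma orbit_conjugate: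
  assumes "bij g"
  shows "orbit (g \<circ> q \<circ> inv g) (g x) = g ` orbit q x"
  using assms unfolding orbit_altdef funpow_conjugate[OF assms] by (auto simp: bij_is_inj)

lemma cycle_structure_conjugate:
  assumes "g permutes {1..n}"
  shows "cycle_structure n (g \<circ> q \<circ> inv g) = cycle_structure n q"
proof -
  have bij: "bij g" using assms by (rule permutes_bij)
  have inj: "inj_on (image g) A" for A :: "nat set set"
    using bij by (meson bij_is_inj inj_image_eq_iff inj_onI)
  have "orbit (g \<circ> q \<circ> inv g) ` {1..n} = orbit (g \<circ> q \<circ> inv g) ` g ` {1..n}"
    using permutes_image[OF assms] by simp
  also have "\<dots> = image g ` orbit q ` {1..n}"
    by (simp add: image_image orbit_conjugate[OF bij])
  finally have orbits: "orbit (g \<circ> q \<circ> inv g) ` {1..n} = image g ` orbit q ` {1..n}" .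
  have "cycle_structure n (g \<circ> q \<circ> inv g)
      = image_mset (card \<circ> image g) (mset_set (orbit q ` {1..n}))"
    unfolding cycle_structure_def orbits image_mset_mset_set[OF inj, symmetric]
    by (simp add: multiset.map_comp)
  also have "\<dots> = cycle_structure n q"
    unfolding cycle_structure_def
    by (intro multiset.map_cong0) (simp add: card_image bij_is_inj inj_on_subset[OF _ subset_UNIV] bij)
  finally show ?thesis .
qed

lemma fixes_square_apply:
  assumes "\<alpha> permutes {1..n}" "\<beta> permutes {1..n}" "fixes_square n (\<alpha>, \<beta>, \<gamma>) L"
    and "r \<in> {1..n}" "c \<in> {1..n}"
  shows "\<gamma> (L r c) = L (\<alpha> r) (\<beta> c)"
proof -
  have "\<alpha> r \<in> {1..n}" "\<beta> c \<in> {1..n}"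
    using assms by (simp_all only: permutes_in_image)
  then show ?thesis
    using assms(3) permutes_inverses(2)[OF assms(1)] permutes_inverses(2)[OF assms(2)]
    unfolding fixes_square_def isotope_def by fastforce
qed

lemma Theta_is_isotopism:
  assumes "latin_square n L" "1 \<le> n" "\<alpha> permutes {1..n}" "j \<in> {1..n}"
  shows "is_isotopism n (Theta n L \<alpha> j)"
proof -
  have "inv \<alpha> 1 \<in> {1..n}"
    using assms(2) by (intro permutes_mem[OF permutes_inv[OF assms(3)]]) simp
  then show ?thesis
    using assms unfolding is_isotopism_def Theta_def
    by (metis case_prod_conv permutes_compose permutes_inv row_perm_permutes col_perm_permutes)
qed

locale reduced_latin_square =
  fixes n :: nat and L :: "nat \<Rightarrow> nat \<Rightarrow> nat"
  assumes order_pos: "1 \<le> n" and latin: "latin_square n L" and reduced: "reduced n L"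
begin

lemma one_mem: "1 \<in> {1..n}"
  using order_pos by simp

lemma inv_permutes_one_mem: "p permutes {1..n} \<Longrightarrow> inv p 1 \<in> {1..n}"
  by (rule permutes_mem[OF permutes_inv one_mem])

lemma first_row: "c \<in> {1..n} \<Longrightarrow> L 1 c = c"
  using row_perm_apply[OF latin one_mem] reduced by (simp add: reduced_def)

lemma first_col: "r \<in> {1..n} \<Longrightarrow> L r 1 = r"
  using col_perm_apply[OF latin _ one_mem] reduced by (simp add: reduced_def)

context
  fixes \<alpha> \<beta> \<gamma>
  assumes autotopy: "(\<alpha>, \<beta>, \<gamma>) \<in> autotopy_group n L"
begin

lemma autotopy_permutes:
  "\<alpha> permutes {1..n}" "\<beta> permutes {1..n}" "\<gamma> permutes {1..n}"
  using autotopy by (simp_all add: autotopy_group_def is_isotopism_def)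

lemma autotopy_apply: "r \<in> {1..n} \<Longrightarrow> c \<in> {1..n} \<Longrightarrow> \<gamma> (L r c) = L (\<alpha> r) (\<beta> c)"
  using fixes_square_apply[OF autotopy_permutes(1,2)] autotopy
  by (simp add: autotopy_group_def)

lemma autotopy_symbol_perm: "\<gamma> = \<alpha> \<circ> col_perm n L (inv \<beta> 1)"
proof -
  define j where "j = inv \<beta> 1"
  have j: "j \<in> {1..n}" "\<beta> j = 1"
    unfolding j_def using inv_permutes_one_mem[OF autotopy_permutes(2)]
    by (simp_all add: permutes_inverses(1)[OF autotopy_permutes(2)])
  note \<pi> = col_perm_permutes[OF latin j(1)]
  have "\<gamma> = \<alpha> \<circ> col_perm n L j"
  proof (rule permutes_eqI[OF autotopy_permutes(3) permutes_compose[OF \<pi> autotopy_permutes(1)]])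
    fix s assume s: "s \<in> {1..n}"
    define r where "r = col_perm n L j s"
    have r: "r \<in> {1..n}" "L r j = s"
      unfolding r_def by (rule permutes_mem[OF \<pi> s], rule L_col_perm_apply[OF latin j(1) s])
    then have "\<gamma> s = L (\<alpha> r) 1"
      using autotopy_apply[OF r(1) j(1)] j(2) by simp
    also have "\<dots> = \<alpha> r"
      by (rule first_col[OF permutes_mem[OF autotopy_permutes(1) r(1)]])
    finally show "\<gamma> s = (\<alpha> \<circ> col_perm n L j) s"
      by (simp add: r_def)
  qed
  then show ?thesis by (simp add: j_def)
qed

lemma autotopy_col_perm: "\<beta> = \<gamma> \<circ> inv (row_perm n L (inv \<alpha> 1))"
proof -
  define r\<^sub>0 where "r\<^sub>0 = inv \<alpha> 1"
  have r\<^sub>0: "r\<^sub>0 \<in> {1..n}" "\<alpha> r\<^sub>0 = 1"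
    unfolding r\<^sub>0_def using inv_permutes_one_mem[OF autotopy_permutes(1)]
    by (simp_all add: permutes_inverses(1)[OF autotopy_permutes(1)])
  note \<sigma> = permutes_inv[OF row_perm_permutes[OF latin r\<^sub>0(1)]]
  have "\<beta> = \<gamma> \<circ> inv (row_perm n L r\<^sub>0)"
  proof (rule permutes_eqI[OF autotopy_permutes(2) permutes_compose[OF \<sigma> autotopy_permutes(3)]])
    fix c assume c: "c \<in> {1..n}"
    have "\<beta> c = L (\<alpha> r\<^sub>0) (\<beta> c)"
      using first_row[OF permutes_mem[OF autotopy_permutes(2) c]] r\<^sub>0(2) by simp
    also have "\<dots> = \<gamma> (L r\<^sub>0 c)"
      by (rule autotopy_apply[OF r\<^sub>0(1) c, symmetric])
    finally show "\<beta> c = (\<gamma> \<circ> inv (row_perm n L r\<^sub>0)) c"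
      by (simp add: inv_row_perm_apply[OF latin r\<^sub>0(1) c])
  qed
  then show ?thesis by (simp add: r\<^sub>0_def)
qed

lemma autotopy_eq_Theta: "(\<alpha>, \<beta>, \<gamma>) = Theta n L \<alpha> (inv \<beta> 1)"
  unfolding Theta_def using autotopy_col_perm autotopy_symbol_perm by simp

lemma autotopy_row_perm_conjugate:
  assumes i: "i \<in> {1..n}"
  shows "row_perm n L (\<alpha> i) = \<gamma> \<circ> (inv (row_perm n L (inv \<alpha> 1)) \<circ> row_perm n L i) \<circ> inv \<gamma>"
proof -
  note \<sigma>\<^sub>0 = permutes_inv[OF row_perm_permutes[OF latin inv_permutes_one_mem[OF autotopy_permutes(1)]]]
  note \<sigma>\<^sub>i = row_perm_permutes[OF latin i]
  note \<gamma> = autotopy_permutes(3)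
  have \<alpha>i: "\<alpha> i \<in> {1..n}" by (rule permutes_mem[OF autotopy_permutes(1) i])
  show ?thesis
  proof (rule permutes_eqI[OF row_perm_permutes[OF latin \<alpha>i]])
    show "\<gamma> \<circ> (inv (row_perm n L (inv \<alpha> 1)) \<circ> row_perm n L i) \<circ> inv \<gamma> permutes {1..n}"
      by (intro permutes_compose permutes_inv \<sigma>\<^sub>0 \<sigma>\<^sub>i \<gamma>)
    fix s assume s: "s \<in> {1..n}"
    define c where "c = row_perm n L i (inv \<gamma> s)"
    have c: "c \<in> {1..n}" "\<gamma> (L i c) = s"
      using permutes_mem[OF permutes_inv[OF \<gamma>] s] permutes_mem[OF \<sigma>\<^sub>i]
        L_row_perm_apply[OF latin i] permutes_inverses(1)[OF \<gamma>]
      by (simp_all add: c_def)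
    have "row_perm n L (\<alpha> i) s = row_perm n L (\<alpha> i) (L (\<alpha> i) (\<beta> c))"
      using autotopy_apply[OF i c(1)] c(2) by simp
    also have "\<dots> = \<beta> c"
      by (rule row_perm_apply[OF latin \<alpha>i permutes_mem[OF autotopy_permutes(2) c(1)]])
    finally show "row_perm n L (\<alpha> i) s
        = (\<gamma> \<circ> (inv (row_perm n L (inv \<alpha> 1)) \<circ> row_perm n L i) \<circ> inv \<gamma>) s"
      by (subst (asm) autotopy_col_perm) (simp add: c_def)
  qed
qed

lemma autotopy_in_I_set: "\<alpha> \<in> I_set n L (inv \<alpha> 1)"
  unfolding I_set_def
  using autotopy_permutes(1) autotopy_row_perm_conjugate
    cycle_structure_conjugate[OF autotopy_permutes(3)]
  by simp

end
end

theorem theorem5p2: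
  fixes n :: nat and L :: "nat \<Rightarrow> nat \<Rightarrow> nat"
  assumes "n \<ge> 1" and "latin_square n L" and "reduced n L"
  shows "autotopy_group n L =
    {Theta n L \<alpha> j | \<alpha> j. \<alpha> \<in> (\<Union>k\<in>{1..n}. I_set n L k) \<and> j \<in> {1..n}
                          \<and> fixes_square n (Theta n L \<alpha> j) L}"
proof -
  interpret reduced_latin_square n L
    using assms by unfold_locales
  show ?thesis
  proof (intro set_eqI iffI)
    fix \<Theta> assume \<Theta>_mem: "\<Theta> \<in> autotopy_group n L"
    obtain \<alpha> \<beta> \<gamma> where \<Theta>: "\<Theta> = (\<alpha>, \<beta>, \<gamma>)" by (cases \<Theta>)
    with \<Theta>_mem have autotopy: "(\<alpha>, \<beta>, \<gamma>) \<in> autotopy_group n L" by simp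
    have "\<Theta> = Theta n L \<alpha> (inv \<beta> 1)"
      using autotopy_eq_Theta[OF autotopy] \<Theta> by simp
    moreover have "\<alpha> \<in> (\<Union>k\<in>{1..n}. I_set n L k)"
      using autotopy_in_I_set[OF autotopy] inv_permutes_one_mem[OF autotopy_permutes(1)[OF autotopy]]
      by blast
    moreover have "inv \<beta> 1 \<in> {1..n}"
      by (rule inv_permutes_one_mem[OF autotopy_permutes(2)[OF autotopy]])
    moreover have "fixes_square n \<Theta> L"
      using \<Theta>_mem by (simp add: autotopy_group_def)
    ultimately show "\<Theta> \<in> {Theta n L \<alpha> j | \<alpha> j. \<alpha> \<in> (\<Union>k\<in>{1..n}. I_set n L k) \<and> j \<in> {1..n}
                                  \<and> fixes_square n (Theta n L \<alpha> j) L}"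
      by blast
  next
    fix \<Theta> assume "\<Theta> \<in> {Theta n L \<alpha> j | \<alpha> j. \<alpha> \<in> (\<Union>k\<in>{1..n}. I_set n L k) \<and> j \<in> {1..n}
                                 \<and> fixes_square n (Theta n L \<alpha> j) L}"
    then obtain \<alpha> j where "\<Theta> = Theta n L \<alpha> j" "\<alpha> permutes {1..n}" "j \<in> {1..n}"
      and "fixes_square n \<Theta> L"
      by (auto simp: I_set_def)
    then show "\<Theta> \<in> autotopy_group n L"
      using Theta_is_isotopism[OF latin order_pos] by (simp add: autotopy_group_def)
  qed
qed

end
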